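(* There is a constant $b>0$ such that $|X^{(j)}_k(x)|\le b^{k+j}|x|^j$ for all $x\in\mathbb R^{n+1}$ and all $k,j\in\mathbb N_0$.
   Context: $\mathbb R_n$ is the real Clifford algebra generated by $e_1,\dots,e_n$ with $e_ie_j+e_je_i=-2\delta_{ij}$, and $|\cdot|$ is the Euclidean norm on $\mathbb R_n\cong\mathbb R^{2^n}$. A point $x=(x_0,\underline x)\in\mathbb R^{n+1}$ is identified with $x_0+\underline x$, $\underline x=\sum_jx_je_j$, and $|x|^2=x_0^2+|\underline x|^2$. The Gegenbauer polynomials are $C^\nu_j(z)=\sum_{i=0}^{[j/2]}\frac{(-1)^i(\nu)_{j-i}}{i!(j-2i)!}(2z)^{j-2i}$ with $(\nu)_j=\nu(\nu+1)\cdots(\nu+j-1)$. Set $X^{(0)}_k=1$ and for $j\in\mathbb N$ $$X^{(j)}_k(x)=\mu^j_k|x|^j\Big(C^{(n-1)/2+k}_j\big(\tfrac{x_0}{|x|}\big)+\frac{n+2k-1}{n+2k+j-1}C^{(n+1)/2+k}_{j-1}\big(\tfrac{x_0}{|x|}\big)\frac{\underline x}{|x|}\Big),$$ where $\mu^{2l}_k=(-1)^l\big(C^{(n-1)/2+k}_{2l}(0)\big)^{-1}$ and $\mu^{2l+1}_k=(-1)^l\frac{n+2k+2l}{n+2k-1}\big(C^{(n+1)/2+k}_{2l}(0)\big)^{-1}$. (For a spherical monogenic $P_k$ of degree $k$, $X^{(j)}_k(x)P_k(\underline x)$ is the monogenic extension of $\underline x^jP_k(\underline x)$.) *)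

theory Defs
  imports Complex_Main
begin

definition gegenbauer :: "real \<Rightarrow> nat \<Rightarrow> real \<Rightarrow> real" where
  "gegenbauer \<nu> j z = (\<Sum>i=0..j div 2.
      (-1)^i * pochhammer \<nu> (j - i) / (fact i * fact (j - 2*i)) * (2*z)^(j - 2*i))"

text \<open>Elements of the real Clifford algebra R_n, as coefficient functions on
  the basis blades e_A, A a subset of {1..n}; only subsets of {1..n} are relevant.\<close>
type_synonym clifford = "nat set \<Rightarrow> real"

definition cl_norm :: "nat \<Rightarrow> clifford \<Rightarrow> real" where
  "cl_norm n a = sqrt (\<Sum>A\<in>Pow {1..n}. (a A)^2)"

definition paravec :: "nat \<Rightarrow> real \<Rightarrow> (nat \<Rightarrow> real) \<Rightarrow> clifford" where
  "paravec n s v = (\<lambda>A. if A = {} then s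
                         else if (\<exists>i\<in>{1..n}. A = {i}) then v (the_elem A) else 0)"

definition pnorm :: "nat \<Rightarrow> real \<Rightarrow> (nat \<Rightarrow> real) \<Rightarrow> real" where
  "pnorm n x0 xs = sqrt (x0^2 + (\<Sum>i=1..n. (xs i)^2))"

definition mu :: "nat \<Rightarrow> nat \<Rightarrow> nat \<Rightarrow> real" where
  "mu n k j = (if even j then
       (-1)^(j div 2) / gegenbauer ((real n - 1)/2 + real k) j 0
     else
       (-1)^(j div 2) * ((real n + 2*real k + 2*real (j div 2)) / (real n + 2*real k - 1))
         / gegenbauer ((real n + 1)/2 + real k) (j - 1) 0)"

definition Xjk :: "nat \<Rightarrow> nat \<Rightarrow> nat \<Rightarrow> real \<Rightarrow> (nat \<Rightarrow> real) \<Rightarrow> clifford" where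
  "Xjk n k j x0 xs = (if j = 0 then paravec n 1 (\<lambda>_. 0) else
     (let r = pnorm n x0 xs; t = x0 / r in
      paravec n (mu n k j * r^j * gegenbauer ((real n - 1)/2 + real k) j t)
        (\<lambda>i. mu n k j * r^j * ((real n + 2*real k - 1) / (real n + 2*real k + real j - 1))
              * gegenbauer ((real n + 1)/2 + real k) (j - 1) t * (xs i / r))))"

end

theory Submission
  imports Defs
begin

(* For j = 0 the function X^(0)_k is the constant 1.  For j >= 1,
   X^(j)_k(x) is the paravector  s + c * (x_1/|x|, ..., x_n/|x|)  with
     s = mu * |x|^j * C^nu_j(t),   c = mu * |x|^j * f * C^(nu+1)_(j-1)(t),
   where t = x0/|x| and |t| <= 1, |f| <= 1.  Its Clifford norm is at most |s| + |c|.
   Everything therefore reduces to exponential bounds on two scalar sequences: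
   (1) |C^nu_j(t)| <= 2^(N + 4j) for 0 <= nu <= N and |t| <= 1, obtained termwise
       from the upper bound  (x)_m <= m! 2^(N+m)  for Pochhammer symbols;
   (2) |mu^j_k| <= 2^(n + 2k + 2j), since C^nu_(2l)(0) = (-1)^l (nu)_l / l! and
       the lower bound  (nu)_l >= l!/2^l  for nu >= 1/2 controls its inverse.
   Together  |X^(j)_k(x)| <= 2^(2n+3k+6j+1) |x|^j <= (2^(2n+7))^(k+j) |x|^j. *)

section \<open>Bounds for Pochhammer symbols\<close>

text \<open>The rising factorial of a real number is at most that of a larger integer
  point, which is a binomial coefficient times a factorial.\<close>
lemma pochhammer_mono:
  fixes x y :: real
  assumes "0 \<le> x" "x \<le> y"
  shows "pochhammer x m \<le> pochhammer y m"
  unfolding pochhammer_prod using assms by (intro prod_mono) auto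

lemma pochhammer_of_nat_Suc_le: "pochhammer (real N + 1) m \<le> fact m * 2^(N+m)"
proof -
  have "(fact (N+m) :: real) = fact N * pochhammer (real N + 1) m"
    using pochhammer_product'[of "1::real" N m] unfolding pochhammer_fact
    by (simp add: add.commute)
  moreover have "fact N * (fact m * ((N+m) choose m)) = (fact (N+m) :: nat)"
    using binomial_fact_lemma[of m "N+m"] by (simp add: mult_ac)
  then have "(fact (N+m) :: real) = fact N * (fact m * real ((N+m) choose m))"
    by (metis of_nat_fact of_nat_mult)
  ultimately have "pochhammer (real N + 1) m = fact m * real ((N+m) choose m)"
    by simp
  also have "\<dots> \<le> fact m * 2^(N+m)"
    using binomial_le_pow2[of "N+m" m] by (intro mult_left_mono) (simp_all flip: of_nat_le_iff)
  finally show ?thesis .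
qed

lemma pochhammer_upper:
  fixes x :: real
  assumes "0 \<le> x" "x \<le> real N"
  shows "pochhammer x m \<le> fact m * 2^(N+m)"
  using pochhammer_mono[of x "real N + 1" m] pochhammer_of_nat_Suc_le[of N m] assms
  by linarith

text \<open>Lower bound: every factor of (x)_l is at least half of the corresponding
  factor of l!.\<close>
lemma pochhammer_lower:
  fixes x :: real
  assumes "1/2 \<le> x"
  shows "fact l / 2^l \<le> pochhammer x l"
proof (induction l)
  case 0
  then show ?case by simp
next
  case (Suc l)
  have "fact (Suc l) / 2^(Suc l) = (fact l / 2^l) * ((real l + 1)/2)"
    by (simp add: field_simps)
  also have "\<dots> \<le> pochhammer x l * (x + real l)"
    using Suc assms by (intro mult_mono) (auto intro: pochhammer_nonneg)
  finally show ?case by (simp add: pochhammer_Suc)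
qed

section \<open>Bounds for Gegenbauer polynomials\<close>

text \<open>Each summand of C^nu_j(t) is bounded by 2^(N+3j): the Pochhammer bound turns
  the coefficient into a binomial coefficient times a power of 2.\<close>
lemma gegenbauer_summand_bound:
  fixes \<nu> t :: real
  assumes "0 \<le> \<nu>" "\<nu> \<le> real N" "\<bar>t\<bar> \<le> 1" "2*i \<le> j"
  shows "\<bar>(-1)^i * pochhammer \<nu> (j - i) / (fact i * fact (j - 2*i)) * (2*t)^(j - 2*i)\<bar>
           \<le> 2^(N + 3*j)"
proof -
  have poch_nonneg: "0 \<le> pochhammer \<nu> (j-i)"
    using assms(1) by (simp add: pochhammer_prod prod_nonneg)
  have power_le: "\<bar>(2*t)^(j - 2*i)\<bar> \<le> 2^j"
  proof -
    have "\<bar>(2*t)^(j - 2*i)\<bar> = 2^(j - 2*i) * \<bar>t\<bar>^(j - 2*i)"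
      by (simp add: power_abs power_mult_distrib abs_mult)
    also have "\<dots> \<le> 2^j * 1"
      using assms(3) by (intro mult_mono power_increasing power_le_one) auto
    finally show ?thesis by simp
  qed
  have "fact i * fact (j - 2*i) * ((j-i) choose i) = (fact (j-i) :: nat)"
    using binomial_fact_lemma[of i "j-i"] assms(4) by (simp add: diff_diff_add mult_2)
  then have fact_split: "(fact (j-i) :: real) = fact i * fact (j - 2*i) * real ((j-i) choose i)"
    by (metis of_nat_fact of_nat_mult)
  have binom_le: "real ((j-i) choose i) \<le> 2^j"
  proof -
    have "(j-i) choose i \<le> 2^(j-i)" by (rule binomial_le_pow2)
    also have "(2::nat)^(j-i) \<le> 2^j" by (intro power_increasing) auto
    finally show ?thesis by (simp flip: of_nat_le_iff)
  qed
  have "pochhammer \<nu> (j-i) / (fact i * fact (j - 2*i))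
          \<le> fact (j-i) * 2^(N + (j-i)) / (fact i * fact (j - 2*i))"
    by (intro divide_right_mono pochhammer_upper assms) auto
  also have "\<dots> = real ((j-i) choose i) * 2^(N + (j-i))"
    unfolding fact_split by simp
  also have "\<dots> \<le> 2^j * 2^(N+j)"
    by (intro mult_mono binom_le power_increasing) auto
  finally have coeff_le: "pochhammer \<nu> (j-i) / (fact i * fact (j - 2*i)) \<le> 2^j * 2^(N+j)" .
  have "\<bar>(-1)^i * pochhammer \<nu> (j - i) / (fact i * fact (j - 2*i)) * (2*t)^(j - 2*i)\<bar>
      = pochhammer \<nu> (j-i) / (fact i * fact (j - 2*i)) * \<bar>(2*t)^(j - 2*i)\<bar>"
    using poch_nonneg by (simp add: abs_mult)
  also have "\<dots> \<le> (2^j * 2^(N+j)) * 2^j"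
    by (intro mult_mono coeff_le power_le) (use poch_nonneg in auto)
  also have "\<dots> = 2^(j + (N+j) + j)" by (simp only: power_add)
  also have "j + (N+j) + j = N + 3*j" by simp
  finally show ?thesis .
qed

text \<open>Uniform exponential bound on [-1,1]; there are at most 2^j summands.\<close>
lemma gegenbauer_bound:
  fixes \<nu> t :: real
  assumes "0 \<le> \<nu>" "\<nu> \<le> real N" "\<bar>t\<bar> \<le> 1"
  shows "\<bar>gegenbauer \<nu> j t\<bar> \<le> 2^(N + 4*j)"
proof -
  have "\<bar>gegenbauer \<nu> j t\<bar>
      \<le> (\<Sum>i=0..j div 2. \<bar>(-1)^i * pochhammer \<nu> (j - i) / (fact i * fact (j - 2*i)) * (2*t)^(j - 2*i)\<bar>)"
    unfolding gegenbauer_def by (rule sum_abs)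
  also have "\<dots> \<le> (\<Sum>i=0..j div 2. 2^(N + 3*j))"
    by (intro sum_mono gegenbauer_summand_bound assms) auto
  also have "\<dots> = (real (j div 2) + 1) * 2^(N + 3*j)" by simp
  also have "\<dots> \<le> 2^j * 2^(N + 3*j)"
  proof -
    have "real (j div 2) + 1 \<le> real j + 1" by simp
    also have "\<dots> \<le> 2^j"
      using of_nat_mono[OF Suc_leI[OF less_exp[of j]], where 'a=real] by simp
    finally show ?thesis by (intro mult_right_mono) auto
  qed
  also have "\<dots> = 2^(j + (N + 3*j))" by (simp only: power_add)
  also have "j + (N + 3*j) = N + 4*j" by simp
  finally show ?thesis .
qed

text \<open>Only the i = l summand of C^nu_(2l)(0) survives.\<close>
lemma gegenbauer_even_at_zero: "gegenbauer \<nu> (2*l) 0 = (-1)^l * pochhammer \<nu> l / fact l"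
proof -
  have "gegenbauer \<nu> (2*l) 0
      = (\<Sum>i=0..l. if i = l then (-1)^i * pochhammer \<nu> (2*l - i) / (fact i * fact (2*l - 2*i)) else 0)"
    unfolding gegenbauer_def by (intro sum.cong) (auto simp: power_0_left)
  also have "\<dots> = (-1)^l * pochhammer \<nu> l / fact l" by (simp add: mult_2)
  finally show ?thesis .
qed

lemma gegenbauer_even_at_zero_inverse_bound:
  fixes \<nu> :: real
  assumes "1/2 \<le> \<nu>"
  shows "\<bar>(-1)^l / gegenbauer \<nu> (2*l) 0\<bar> \<le> 2^l"
proof -
  have lower: "fact l / 2^l \<le> pochhammer \<nu> l" using assms by (rule pochhammer_lower)
  then have pos: "0 < pochhammer \<nu> l" by (smt (verit) divide_pos_pos fact_gt_zero zero_less_power)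
  have "\<bar>(-1)^l / gegenbauer \<nu> (2*l) 0\<bar> = fact l / pochhammer \<nu> l"
    using pos by (simp add: gegenbauer_even_at_zero abs_mult)
  also have "\<dots> \<le> 2^l" using lower pos by (simp add: field_simps)
  finally show ?thesis .
qed

section \<open>The normalising constants\<close>

text \<open>mu^j_k is, up to the rational factor (n+2k+2l)/(n+2k-1) in odd degree, the
  inverse of a Gegenbauer value at 0 of even degree, hence grows only exponentially.\<close>
lemma mu_bound:
  assumes "1 \<le> n" "1 \<le> j"
  shows "\<bar>mu n k j\<bar> \<le> 2^(n + 2*k + 2*j)"
proof -
  have lin_le: "real n + 2*real k + real j \<le> 2^(n + 2*k + j)"
    using of_nat_less_two_power[of "n + 2*k + j", where 'a=real] by simp
  have "\<bar>mu n k j\<bar> \<le> 2^j * (real n + 2*real k + real j)"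
  proof (cases "even j")
    case True
    then obtain l where l: "j = 2*l" by blast
    define \<nu> where "\<nu> = (real n - 1)/2 + real k"
    have "\<bar>mu n k j\<bar> \<le> 2^l"
    proof (cases "\<nu> \<ge> 1/2")
      case True
      then show ?thesis
        using gegenbauer_even_at_zero_inverse_bound[of \<nu> l] \<open>even j\<close>
        by (simp add: mu_def l \<nu>_def)
    next
      case False
      text \<open>Only n = 1, k = 0 remains: nu = 0 and C^0_(2l)(0) = 0, so mu = 0.\<close>
      then have "real n + 2 * real k < 2" unfolding \<nu>_def by (simp add: field_simps)
      then have "n = 1" "k = 0" using assms(1) by linarith+
      then have "\<nu> = 0" "l \<noteq> 0" using assms l by (auto simp: \<nu>_def)
      then show ?thesis
        using \<open>even j\<close> by (simp add: mu_def l gegenbauer_even_at_zero pochhammer_0_left \<nu>_def)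
    qed
    also have "(2::real)^l \<le> 2^j * 1" by (simp add: l power_increasing)
    also have "\<dots> \<le> 2^j * (real n + 2*real k + real j)"
      using assms by (intro mult_left_mono) auto
    finally show ?thesis .
  next
    case False
    then obtain l where l: "j = 2*l + 1" using oddE by blast
    define \<nu> where "\<nu> = (real n + 1)/2 + real k"
    define R where "R = (real n + 2*real k + 2*real l) / (real n + 2*real k - 1)"
    have mu_eq: "mu n k j = R * ((-1)^l / gegenbauer \<nu> (2*l) 0)"
      using False by (simp add: mu_def l \<nu>_def R_def)
    have inv_le: "\<bar>(-1)^l / gegenbauer \<nu> (2*l) 0\<bar> \<le> 2^l"
    proof (rule gegenbauer_even_at_zero_inverse_bound)
      show "1/2 \<le> \<nu>" using assms(1) unfolding \<nu>_def by (simp add: field_simps)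
    qed
    have R_le: "\<bar>R\<bar> \<le> real n + 2*real k + real j"
    proof (cases "n + 2*k \<ge> 2")
      case True
      then have "1 \<le> real n + 2*real k - 1" by (simp flip: of_nat_le_iff)
      then have "0 \<le> R" "R \<le> (real n + 2*real k + 2*real l) / 1"
        unfolding R_def
        using divide_left_mono[of 1 "real n + 2*real k - 1" "real n + 2*real k + 2*real l"]
        by simp_all
      then show ?thesis using l by simp
    next
      case False
      then have "real n + 2*real k - 1 = 0" using assms by simp
      then show ?thesis by (simp add: R_def)
    qed
    have "\<bar>mu n k j\<bar> \<le> (real n + 2*real k + real j) * 2^l"
      unfolding mu_eq abs_mult by (intro mult_mono R_le inv_le) auto
    also have "\<dots> \<le> (real n + 2*real k + real j) * 2^j"
      by (intro mult_left_mono power_increasing) (auto simp: l)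
    finally show ?thesis by (simp add: mult.commute)
  qed
  also have "\<dots> \<le> 2^j * 2^(n + 2*k + j)" by (intro mult_left_mono lin_le) auto
  also have "\<dots> = 2^(n + 2*k + 2*j)" by (simp add: power_add mult_2)
  finally show ?thesis .
qed

section \<open>Paravectors and the unit sphere\<close>

text \<open>Only the scalar and the n vector blades of a paravector are nonzero.\<close>
lemma cl_norm_paravec: "cl_norm n (paravec n s v) = sqrt (s^2 + (\<Sum>i=1..n. (v i)^2))"
proof -
  let ?f = "\<lambda>A. (paravec n s v A)^2"
  define S where "S = insert {} ((\<lambda>i. {i}) ` {1..n})"
  have "(\<Sum>A\<in>Pow {1..n}. ?f A) = (\<Sum>A\<in>S. ?f A)"
    by (rule sum.mono_neutral_right) (auto simp: S_def paravec_def)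
  also have "\<dots> = ?f {} + (\<Sum>A\<in>(\<lambda>i. {i}) ` {1..n}. ?f A)"
    unfolding S_def by (rule sum.insert) auto
  also have "(\<Sum>A\<in>(\<lambda>i. {i}) ` {1..n}. ?f A) = (\<Sum>i=1..n. ?f {i})"
    by (rule sum.reindex_cong[where l="\<lambda>i. {i}"]) (auto simp: inj_on_def)
  also have "(\<Sum>i=1..n. ?f {i}) = (\<Sum>i=1..n. (v i)^2)"
    by (intro sum.cong) (auto simp: paravec_def)
  finally show ?thesis by (simp add: cl_norm_def paravec_def)
qed

lemma cl_norm_paravec_scaled_le:
  assumes "(\<Sum>i=1..n. (v i)^2) \<le> 1"
  shows "cl_norm n (paravec n s (\<lambda>i. c * v i)) \<le> \<bar>s\<bar> + \<bar>c\<bar>"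
proof -
  have "(\<Sum>i=1..n. (c * v i)^2) = c^2 * (\<Sum>i=1..n. (v i)^2)"
    by (simp add: power_mult_distrib sum_distrib_left)
  also have "\<dots> \<le> c^2" using assms by (simp add: mult_left_le)
  also have "c^2 \<le> c^2 + 2 * \<bar>s\<bar> * \<bar>c\<bar>" by simp
  finally have "s^2 + (\<Sum>i=1..n. (c * v i)^2) \<le> (\<bar>s\<bar> + \<bar>c\<bar>)^2"
    unfolding power2_sum by simp
  then have "cl_norm n (paravec n s (\<lambda>i. c * v i)) \<le> sqrt ((\<bar>s\<bar> + \<bar>c\<bar>)^2)"
    unfolding cl_norm_paravec by (rule real_sqrt_le_mono)
  then show ?thesis by simp
qed

lemma pnorm_nonneg: "0 \<le> pnorm n x0 xs"
  unfolding pnorm_def by (simp add: sum_nonneg add_nonneg_nonneg)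

lemma pnorm_square: "(pnorm n x0 xs)^2 = x0^2 + (\<Sum>i=1..n. (xs i)^2)"
  unfolding pnorm_def by (simp add: sum_nonneg add_nonneg_nonneg)

lemma pnorm_scalar_part_le: "\<bar>x0 / pnorm n x0 xs\<bar> \<le> 1"
proof -
  have "x0^2 \<le> (pnorm n x0 xs)^2" unfolding pnorm_square by (simp add: sum_nonneg)
  then have "\<bar>x0\<bar> \<le> pnorm n x0 xs" using pnorm_nonneg by (metis abs_le_square_iff abs_of_nonneg)
  then show ?thesis
    using pnorm_nonneg[of n x0 xs] by (cases "pnorm n x0 xs = 0") (auto simp: abs_divide)
qed

lemma pnorm_vector_part_le: "(\<Sum>i=1..n. (xs i / pnorm n x0 xs)^2) \<le> 1"
proof (cases "pnorm n x0 xs = 0")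
  case False
  have "(\<Sum>i=1..n. (xs i / pnorm n x0 xs)^2) = (\<Sum>i=1..n. (xs i)^2) / (pnorm n x0 xs)^2"
    by (simp add: power_divide sum_divide_distrib)
  also have "\<dots> \<le> 1"
  proof -
    have "0 < (pnorm n x0 xs)^2" using False pnorm_nonneg[of n x0 xs] by simp
    moreover have "(\<Sum>i=1..n. (xs i)^2) \<le> (pnorm n x0 xs)^2" by (simp add: pnorm_square)
    ultimately show ?thesis by (simp add: divide_le_eq_1_pos)
  qed
  finally show ?thesis .
qed simp

lemma Xjk_bound_pos_degree:
  assumes "1 \<le> n" "1 \<le> j"
  shows "cl_norm n (Xjk n k j x0 xs) \<le> 2^(2*n + 3*k + 6*j + 1) * (pnorm n x0 xs)^j"
proof -
  define r where "r = pnorm n x0 xs"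
  define t where "t = x0 / r"
  define f where "f = (real n + 2*real k - 1) / (real n + 2*real k + real j - 1)"
  define G1 where "G1 = gegenbauer ((real n - 1)/2 + real k) j t"
  define G2 where "G2 = gegenbauer ((real n + 1)/2 + real k) (j - 1) t"
  define s where "s = mu n k j * r^j * G1"
  define c where "c = mu n k j * r^j * f * G2"
  define A :: real where "A = 2^(n + 2*k + 2*j) * 2^(n + k + 4*j)"
  have X_eq: "Xjk n k j x0 xs = paravec n s (\<lambda>i. c * (xs i / r))"
    using assms unfolding Xjk_def s_def c_def f_def G1_def G2_def t_def r_def Let_def
    by (simp add: mult.assoc)
  have t_le: "\<bar>t\<bar> \<le> 1" unfolding t_def r_def by (rule pnorm_scalar_part_le)
  have rj: "0 \<le> r^j" unfolding r_def using pnorm_nonneg by simp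
  have mu_le: "\<bar>mu n k j\<bar> \<le> 2^(n + 2*k + 2*j)" using assms by (rule mu_bound)
  have G1_le: "\<bar>G1\<bar> \<le> 2^(n + k + 4*j)"
    unfolding G1_def by (intro gegenbauer_bound t_le) (use assms in auto)
  have "\<bar>G2\<bar> \<le> 2^(n + k + 4*(j-1))"
    unfolding G2_def by (intro gegenbauer_bound t_le) (use assms in auto)
  also have "(2::real)^(n + k + 4*(j-1)) \<le> 2^(n + k + 4*j)" by (intro power_increasing) auto
  finally have G2_le: "\<bar>G2\<bar> \<le> 2^(n + k + 4*j)" .
  have f_le: "\<bar>f\<bar> \<le> 1"
    unfolding f_def using assms by (auto simp: abs_div_pos divide_le_eq_1)
  have "\<bar>s\<bar> = \<bar>mu n k j\<bar> * \<bar>G1\<bar> * r^j"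
    unfolding s_def using rj by (simp add: abs_mult)
  also have "\<dots> \<le> A * r^j"
    unfolding A_def by (intro mult_right_mono mult_mono mu_le G1_le rj) auto
  finally have s_le: "\<bar>s\<bar> \<le> A * r^j" .
  have "\<bar>c\<bar> = \<bar>mu n k j\<bar> * (\<bar>f\<bar> * \<bar>G2\<bar>) * r^j"
    unfolding c_def using rj by (simp add: abs_mult)
  also have "\<dots> \<le> 2^(n + 2*k + 2*j) * (1 * 2^(n + k + 4*j)) * r^j"
    by (intro mult_right_mono mult_mono mu_le G2_le f_le rj) auto
  finally have c_le: "\<bar>c\<bar> \<le> A * r^j" by (simp add: A_def)
  have "cl_norm n (Xjk n k j x0 xs) \<le> \<bar>s\<bar> + \<bar>c\<bar>"
    unfolding X_eq r_def by (intro cl_norm_paravec_scaled_le pnorm_vector_part_le)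
  also have "\<dots> \<le> 2 * A * r^j" using s_le c_le by simp
  also have "2 * A = 2^(Suc ((n + 2*k + 2*j) + (n + k + 4*j)))"
    by (simp only: A_def power_add power_Suc)
  also have "Suc ((n + 2*k + 2*j) + (n + k + 4*j)) = 2*n + 3*k + 6*j + 1" by simp
  finally show ?thesis unfolding r_def .
qed

theorem lemma3p3:
  fixes n :: nat
  assumes "1 \<le> n"
  shows "\<exists>b::real. b > 0 \<and> (\<forall>(x0::real) (xs::nat \<Rightarrow> real) (k::nat) (j::nat).
           cl_norm n (Xjk n k j x0 xs) \<le> b ^ (k + j) * (pnorm n x0 xs) ^ j)"
proof (intro exI conjI allI)
  define b :: real where "b = 2^(2*n + 7)"
  show "b > 0" by (simp add: b_def)
  fix x0 :: real and xs :: "nat \<Rightarrow> real" and k j :: nat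
  show "cl_norm n (Xjk n k j x0 xs) \<le> b^(k + j) * (pnorm n x0 xs)^j"
  proof (cases "j = 0")
    case True
    then show ?thesis by (simp add: Xjk_def cl_norm_paravec b_def one_le_power)
  next
    case False
    then have j_pos: "1 \<le> j" by simp
    have "(2*n + 1) * 1 \<le> (2*n + 1) * (k + j)" using j_pos by (intro mult_le_mono2) simp
    then have "2*n + 3*k + 6*j + 1 \<le> (2*n + 7) * (k + j)" by (simp add: algebra_simps)
    then have "(2::real)^(2*n + 3*k + 6*j + 1) \<le> b^(k + j)"
      unfolding b_def power_mult[symmetric] by (intro power_increasing) auto
    then have "2^(2*n + 3*k + 6*j + 1) * (pnorm n x0 xs)^j \<le> b^(k + j) * (pnorm n x0 xs)^j"
      by (intro mult_right_mono zero_le_power pnorm_nonneg)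
    with Xjk_bound_pos_degree[OF assms j_pos] show ?thesis by (rule order_trans)
  qed
qed

end
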